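(* Let $\kappa_1,\kappa_2>0$ and $a=\sqrt{\kappa_1/\kappa_2}$. For $V>0$, let $\pi^V$ be the unique stationary distribution of the continuous-time Markov chain on $\mathbb{Z}_{\ge0}$ with two transitions: - $x\to x+1$ at rate $\kappa_1V$ (reaction $\emptyset\to X$); - $x\to x-2$ at rate $\frac{\kappa_2}{V}x(x-1)$ (reaction $2X\to\emptyset$). Let $\tilde\pi^V(\tilde w)=\pi^V(V\tilde w)$ for $\tilde w\in\frac1V\mathbb{Z}_{\ge0}$. If $V\to\infty$ along an increasing sequence and $\tilde x^V\in\frac1V\mathbb{Z}_{\ge0}$ with $\tilde x^V\to\tilde x\in(0,\infty)$, then $$\lim_{V\to\infty}\Big[-\tfrac1V\ln\tilde\pi^V(\tilde x^V)\Big]=g(\tilde x),$$ where $$g(\tilde x)=2\sqrt2\,a-2\tilde x\ln a+\tilde x\ln\tilde x-\tilde x(1+\ln2)-\sqrt{\tilde x^2+4a^2}+\tilde x\ln\!\big(\tilde x+\sqrt{\tilde x^2+4a^2}\big).$$ Moreover, $g$ is a Lyapunov function for the deterministic model $\dot x=\kappa_1-2\kappa_2x^2$ on $(0,\infty)$ at its equilibrium $x^*=\sqrt{\kappa_1/(2\kappa_2)}$: - $g''>0$ on $(0,\infty)$; - $g(x^* )=0$ and $g(x)>0$ for $x\neq x^*$; - $g'(x)(\kappa_1-2\kappa_2x^2)\le0$ for all $x>0$, with equality if and only if $x=x^*$.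
   Context: The Markov chain is the stochastic mass-action model of the network $\emptyset\xrightarrow{\kappa_1}X$, $2X\xrightarrow{\kappa_2}\emptyset$, with rate constants scaled as $\kappa_k^V=\kappa_k/V^{|\nu_k|-1}$ ($|\nu_k|$ = number of molecules consumed). *)

theory Defs
  imports "HOL-Analysis.Analysis"
begin

definition qrate :: "real \<Rightarrow> real \<Rightarrow> real \<Rightarrow> nat \<Rightarrow> nat \<Rightarrow> real" where
  "qrate k1 k2 V x y =
     (if y = x + 1 then k1 * V
      else if 2 \<le> x \<and> y = x - 2 then k2 / V * real x * (real x - 1)
      else if y = x then - (k1 * V + k2 / V * real x * (real x - 1))
      else 0)"

definition stationary_dist :: "real \<Rightarrow> real \<Rightarrow> real \<Rightarrow> (nat \<Rightarrow> real) \<Rightarrow> bool" where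
  "stationary_dist k1 k2 V p \<longleftrightarrow>
     (\<forall>x. 0 \<le> p x) \<and> p sums 1 \<and>
     (\<forall>y. (\<lambda>x. p x * qrate k1 k2 V x y) sums 0)"

definition gfun :: "real \<Rightarrow> real \<Rightarrow> real \<Rightarrow> real" where
  "gfun k1 k2 x =
     (let a = sqrt (k1 / k2) in
       2 * sqrt 2 * a - 2 * x * ln a + x * ln x - x * (1 + ln 2)
       - sqrt (x\<^sup>2 + 4 * a\<^sup>2) + x * ln (x + sqrt (x\<^sup>2 + 4 * a\<^sup>2)))"

end

theory Submission
  imports Defs
begin

(* Writing a = sqrt (k1/k2) and c = a^2 V^2, the proof runs as follows.
   1. g (expressed through lyap a) is analysed directly: g' is strictly increasing
      and vanishes exactly at x* = a / sqrt 2, so g is strictly convex with minimum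
      g x* = 0, and g' (k1 - 2 k2 x^2) <= 0 with equality only at x*.
   2. Stationarity implies the cut equation  c p y = (y+1) y p (y+1) + (y+1)(y+2) p (y+2).
      A Wronskian argument shows that nonnegative solutions are unique up to scaling.
   3. The explicit series  prof c y = sum_k c^k / (k! (k+1)!) * binom (k+1) y  solves the cut
      equation, hence every stationary distribution equals prof c / (sum_y prof c y).
   4. Keeping the dominant term of the series (with Stirling bounds) and an exponential tilt
      give  ln (prof c y) / V -> prof_rate a x  whenever y / V -> x > 0; applied at x* this
      also gives  ln (sum_y prof c y) / V -> 2 sqrt 2 a.
   5. Since g = 2 sqrt 2 a - prof_rate a, the theorem follows. *)

section \<open>The rate function and its Lyapunov property\<close>

definition lyap :: "real \<Rightarrow> real \<Rightarrow> real" where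
  "lyap a x = 2 * sqrt 2 * a - 2 * x * ln a + x * ln x - x * (1 + ln 2)
     - sqrt (x\<^sup>2 + 4 * a\<^sup>2) + x * ln (x + sqrt (x\<^sup>2 + 4 * a\<^sup>2))"

lemma gfun_eq_lyap: "gfun k1 k2 = lyap (sqrt (k1 / k2))"
  by (simp add: gfun_def lyap_def Let_def fun_eq_iff)

definition lyap_deriv :: "real \<Rightarrow> real \<Rightarrow> real" where
  "lyap_deriv a x = ln x + ln (x + sqrt (x\<^sup>2 + 4 * a\<^sup>2)) - 2 * ln a - ln 2"

lemma sqrt_sq_plus_pos: "a > 0 \<Longrightarrow> sqrt (x\<^sup>2 + 4 * a\<^sup>2) > 0"
  by (simp add: add_nonneg_pos)

lemma sqrt_sq_plus_has_derivative:
  fixes a x :: real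
  assumes "a > 0"
  shows "((\<lambda>x. sqrt (x\<^sup>2 + 4 * a\<^sup>2)) has_real_derivative x / sqrt (x\<^sup>2 + 4 * a\<^sup>2)) (at x)"
  using sqrt_sq_plus_pos[OF assms, of x]
  by (auto intro!: derivative_eq_intros simp: divide_simps)

text \<open>The simplification \<open>d/dx ln (x + s(x)) = 1/s(x)\<close> where \<open>s(x) = \<surd>(x\<^sup>2 + 4a\<^sup>2)\<close>.\<close>
lemma one_plus_over_sum:
  fixes x s :: real
  assumes "s > 0" "x + s > 0"
  shows "(1 + x / s) / (x + s) = 1 / s"
proof -
  have "1 + x / s = (x + s) / s" using assms by (simp add: field_simps)
  then show ?thesis using assms by simp
qed

lemma lyap_has_derivative:
  fixes a x :: real
  assumes a: "a > 0" and x: "x > 0"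
  shows "(lyap a has_real_derivative lyap_deriv a x) (at x)"
proof -
  define S where "S y = sqrt (y\<^sup>2 + 4 * a\<^sup>2)" for y
  have S: "(S has_real_derivative x / S x) (at x)"
    unfolding S_def[abs_def] by (rule sqrt_sq_plus_has_derivative[OF a])
  have s: "S x > 0" and xs: "x + S x > 0" using sqrt_sq_plus_pos[OF a] x by (auto simp: S_def intro: add_pos_pos)
  have "((\<lambda>y. 2 * sqrt 2 * a - 2 * y * ln a + y * ln y - y * (1 + ln 2) - S y + y * ln (y + S y))
      has_real_derivative - 2 * ln a + (ln x + x * (1 / x)) - (1 + ln 2) - x / S x
      + (ln (x + S x) + x * ((1 + x / S x) / (x + S x)))) (at x)"
    by (intro derivative_eq_intros S refl) (use x xs S in auto)
  moreover have "- 2 * ln a + (ln x + x * (1 / x)) - (1 + ln 2) - x / S x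
      + (ln (x + S x) + x * ((1 + x / S x) / (x + S x))) = lyap_deriv a x"
    using x s unfolding one_plus_over_sum[OF s xs] by (simp add: lyap_deriv_def S_def)
  moreover have "lyap a = (\<lambda>y. 2 * sqrt 2 * a - 2 * y * ln a + y * ln y - y * (1 + ln 2) - S y + y * ln (y + S y))"
    by (simp add: lyap_def S_def fun_eq_iff)
  ultimately show ?thesis by simp
qed

lemma lyap_deriv_has_derivative:
  fixes a x :: real
  assumes a: "a > 0" and x: "x > 0"
  shows "(lyap_deriv a has_real_derivative 1 / x + 1 / sqrt (x\<^sup>2 + 4 * a\<^sup>2)) (at x)"
proof -
  define S where "S y = sqrt (y\<^sup>2 + 4 * a\<^sup>2)" for y
  have S: "(S has_real_derivative x / S x) (at x)"
    unfolding S_def[abs_def] by (rule sqrt_sq_plus_has_derivative[OF a])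
  have s: "S x > 0" and xs: "x + S x > 0" using sqrt_sq_plus_pos[OF a] x by (auto simp: S_def intro: add_pos_pos)
  have "((\<lambda>y. ln y + ln (y + S y) - 2 * ln a - ln 2)
      has_real_derivative 1 / x + (1 + x / S x) / (x + S x) - 0 - 0) (at x)"
    by (intro derivative_eq_intros S refl) (use x xs S in auto)
  moreover have "lyap_deriv a = (\<lambda>y. ln y + ln (y + S y) - 2 * ln a - ln 2)"
    by (simp add: lyap_deriv_def S_def fun_eq_iff)
  ultimately show ?thesis unfolding one_plus_over_sum[OF s xs] by (simp add: S_def)
qed

text \<open>Monotonicity of \<open>g'\<close> without derivatives: both logarithms increase in \<open>x\<close>.\<close>
lemma lyap_deriv_strict_mono:
  fixes a x y :: real
  assumes a: "a > 0" and x: "0 < x" and xy: "x < y"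
  shows "lyap_deriv a x < lyap_deriv a y"
proof -
  have "sqrt (x\<^sup>2 + 4 * a\<^sup>2) \<le> sqrt (y\<^sup>2 + 4 * a\<^sup>2)"
    using x xy by (intro real_sqrt_le_mono) (simp add: power_mono)
  then have "x + sqrt (x\<^sup>2 + 4 * a\<^sup>2) \<le> y + sqrt (y\<^sup>2 + 4 * a\<^sup>2)" using xy by linarith
  moreover have "0 < x + sqrt (x\<^sup>2 + 4 * a\<^sup>2)" using x by (simp add: add_pos_nonneg)
  ultimately have "ln (x + sqrt (x\<^sup>2 + 4 * a\<^sup>2)) \<le> ln (y + sqrt (y\<^sup>2 + 4 * a\<^sup>2))"
    by (subst ln_le_cancel_iff) auto
  moreover have "ln x < ln y" using x xy by simp
  ultimately show ?thesis unfolding lyap_deriv_def by simp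
qed

text \<open>At the equilibrium \<open>x\<^sup>* = a/\<surd>2\<close> we have \<open>\<surd>(x\<^sup>*\<^sup>2 + 4a\<^sup>2) = 3a/\<surd>2\<close>, so \<open>x\<^sup>* + \<surd>(\<dots>) = 2\<surd>2 a\<close>.\<close>
lemma equilibrium_root:
  fixes a :: real
  assumes a: "a > 0"
  shows "a / sqrt 2 + sqrt ((a / sqrt 2)\<^sup>2 + 4 * a\<^sup>2) = 2 * sqrt 2 * a"
proof -
  have "(a / sqrt 2)\<^sup>2 + 4 * a\<^sup>2 = (3 * a / sqrt 2)\<^sup>2"
    by (simp add: power2_eq_square field_simps)
  then have "sqrt ((a / sqrt 2)\<^sup>2 + 4 * a\<^sup>2) = 3 * a / sqrt 2" using a by simp
  then show ?thesis by (simp add: field_simps)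
qed

lemma lyap_deriv_equilibrium:
  fixes a :: real
  assumes a: "a > 0"
  shows "lyap_deriv a (a / sqrt 2) = 0"
proof -
  have "lyap_deriv a (a / sqrt 2) = ln ((a / sqrt 2) * (2 * sqrt 2 * a)) - ln (a * a) - ln 2"
    using a unfolding lyap_deriv_def equilibrium_root[OF a] by (simp add: ln_mult ln_div)
  also have "\<dots> = 0" using a by (simp add: ln_mult)
  finally show ?thesis .
qed

text \<open>\<dots> and \<open>g\<close> vanishes there, since \<open>g = 2\<surd>2 a - x - \<surd>(x\<^sup>2 + 4a\<^sup>2) + x g'\<close>.\<close>
lemma lyap_equilibrium:
  fixes a :: real
  assumes a: "a > 0"
  shows "lyap a (a / sqrt 2) = 0"
proof -
  let ?x = "a / sqrt 2"
  have "lyap a ?x = 2 * sqrt 2 * a - ?x - sqrt (?x\<^sup>2 + 4 * a\<^sup>2) + ?x * lyap_deriv a ?x"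
    unfolding lyap_def lyap_deriv_def by (simp add: algebra_simps add_divide_distrib)
  then show ?thesis
    using equilibrium_root[OF a] by (simp add: lyap_deriv_equilibrium[OF a])
qed

text \<open>Since \<open>g'\<close> is strictly increasing and vanishes at \<open>x\<^sup>*\<close>, it has the sign of \<open>x - x\<^sup>*\<close>.\<close>
lemma lyap_deriv_sign:
  fixes a x :: real
  assumes a: "a > 0" and x: "x > 0"
  shows "(lyap_deriv a x > 0 \<longleftrightarrow> x > a / sqrt 2) \<and> (lyap_deriv a x < 0 \<longleftrightarrow> x < a / sqrt 2)"
  using lyap_deriv_strict_mono[OF a x, of "a / sqrt 2"] lyap_deriv_equilibrium[OF a]
    lyap_deriv_strict_mono[OF a _, of "a / sqrt 2" x] a
  by (cases x "a / sqrt 2" rule: linorder_cases) auto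

text \<open>\<open>g\<close> is positive away from the equilibrium, by the mean value theorem and the sign of \<open>g'\<close>.\<close>
lemma lyap_pos:
  fixes a x :: real
  assumes a: "a > 0" and x: "x > 0" and ne: "x \<noteq> a / sqrt 2"
  shows "lyap a x > 0"
proof -
  let ?e = "a / sqrt 2"
  have e: "?e > 0" using a by simp
  have D: "\<And>y. 0 < y \<Longrightarrow> (lyap a has_real_derivative lyap_deriv a y) (at y)"
    using lyap_has_derivative[OF a] .
  show ?thesis
  proof (cases "x < ?e")
    case True
    obtain z where z: "x < z" "z < ?e" "lyap a ?e - lyap a x = (?e - x) * lyap_deriv a z"
      using MVT2[OF True, of "lyap a" "lyap_deriv a"] D x by force
    have "lyap_deriv a z < 0" using lyap_deriv_sign[OF a, of z] z x by auto
    then have "(?e - x) * lyap_deriv a z < 0" using True by (simp add: mult_pos_neg)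
    then show ?thesis using z lyap_equilibrium[OF a] by linarith
  next
    case False
    then have lt: "?e < x" using ne by simp
    obtain z where z: "?e < z" "z < x" "lyap a x - lyap a ?e = (x - ?e) * lyap_deriv a z"
      using MVT2[OF lt, of "lyap a" "lyap_deriv a"] D e by force
    have "lyap_deriv a z > 0" using lyap_deriv_sign[OF a, of z] z e by auto
    then show ?thesis using z lt lyap_equilibrium[OF a] by simp
  qed
qed

text \<open>The Lyapunov-function statements of the theorem, for \<open>g = gfun k1 k2 = lyap a\<close> with
  \<open>a = \<surd>(k1/k2)\<close> and \<open>x\<^sup>* = a/\<surd>2\<close>; note \<open>k1 - 2k2x\<^sup>2 = 2k2(x\<^sup>*\<^sup>2 - x\<^sup>2)\<close> has the sign of \<open>x\<^sup>* - x\<close>.\<close>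
lemma gfun_lyapunov:
  fixes k1 k2 :: real
  assumes k1: "k1 > 0" and k2: "k2 > 0"
  shows "(\<forall>x>0. gfun k1 k2 differentiable (at x) \<and> deriv (gfun k1 k2) differentiable (at x)
               \<and> deriv (deriv (gfun k1 k2)) x > 0)
    \<and> gfun k1 k2 (sqrt (k1 / (2 * k2))) = 0
    \<and> (\<forall>x>0. x \<noteq> sqrt (k1 / (2 * k2)) \<longrightarrow> gfun k1 k2 x > 0)
    \<and> (\<forall>x>0. deriv (gfun k1 k2) x * (k1 - 2 * k2 * x\<^sup>2) \<le> 0)
    \<and> (\<forall>x>0. deriv (gfun k1 k2) x * (k1 - 2 * k2 * x\<^sup>2) = 0 \<longleftrightarrow> x = sqrt (k1 / (2 * k2)))"
proof -
  define a where "a = sqrt (k1 / k2)"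
  have a: "a > 0" using k1 k2 by (simp add: a_def)
  have g: "gfun k1 k2 = lyap a" by (simp add: a_def gfun_eq_lyap)
  have eq: "sqrt (k1 / (2 * k2)) = a / sqrt 2" by (simp add: a_def real_sqrt_divide[symmetric])
  have dg: "deriv (lyap a) x = lyap_deriv a x" if "x > 0" for x
    using lyap_has_derivative[OF a that] by (rule DERIV_imp_deriv)
  have ddg: "(deriv (lyap a) has_real_derivative 1 / x + 1 / sqrt (x\<^sup>2 + 4 * a\<^sup>2)) (at x)"
    if "x > 0" for x
    by (rule has_field_derivative_transform_within_open[OF lyap_deriv_has_derivative[OF a that], of "{0<..}"])
       (use that dg in auto)
  have convex: "lyap a differentiable (at x) \<and> deriv (lyap a) differentiable (at x)
      \<and> deriv (deriv (lyap a)) x > 0" if x: "x > 0" for x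
    using lyap_has_derivative[OF a x] ddg[OF x] DERIV_imp_deriv[OF ddg[OF x]]
      sqrt_sq_plus_pos[OF a, of x] x
    by (auto simp: real_differentiable_def intro: add_pos_pos)
  have field: "k1 - 2 * k2 * x\<^sup>2 = 2 * k2 * ((a / sqrt 2 - x) * (a / sqrt 2 + x))" for x
    using k1 k2 by (simp add: a_def power2_eq_square real_sqrt_divide algebra_simps)
  have dissip: "lyap_deriv a x * (k1 - 2 * k2 * x\<^sup>2) \<le> 0 \<and>
      (lyap_deriv a x * (k1 - 2 * k2 * x\<^sup>2) = 0 \<longleftrightarrow> x = a / sqrt 2)" if x: "x > 0" for x
    unfolding field using lyap_deriv_sign[OF a x] lyap_deriv_equilibrium[OF a] a x k2
      add_pos_pos[OF divide_pos_pos[OF a, of "sqrt 2"] x]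
    by (cases x "a / sqrt 2" rule: linorder_cases)
       (auto simp: mult_le_0_iff zero_less_mult_iff mult_less_0_iff)
  show ?thesis
    unfolding g eq using convex lyap_equilibrium[OF a] lyap_pos[OF a] dissip dg by auto
qed

section \<open>Stationary distributions and the cut equation\<close>

text \<open>For a stationary distribution, the flux \<open>k1 V p y\<close>
  from \<open>y\<close> to \<open>y + 1\<close> equals the flux of \<open>2X \<rightarrow> \<emptyset>\<close> jumps from \<open>y + 1\<close> and \<open>y + 2\<close> across
  the cut between \<open>y\<close> and \<open>y + 1\<close>; multiplied by \<open>V / k2\<close> this is the equation below with
  \<open>c = k1 V\<^sup>2 / k2\<close>.\<close>
definition cut_balanced :: "real \<Rightarrow> (nat \<Rightarrow> real) \<Rightarrow> bool" where
  "cut_balanced c p \<longleftrightarrow>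
     (\<forall>y. c * p y = real (y + 1) * real y * p (y + 1) + real (y + 1) * real (y + 2) * p (y + 2))"

text \<open>The balance equation \<open>(pQ) y = 0\<close> written out: only the states \<open>y - 1\<close>, \<open>y\<close>, \<open>y + 2\<close> reach \<open>y\<close>.\<close>
lemma stationary_column:
  fixes p :: "nat \<Rightarrow> real"
  assumes s: "(\<lambda>x. p x * qrate k1 k2 V x y) sums 0"
  shows "(if y \<ge> 1 then p (y - 1) * (k1 * V) else 0) + p (y + 2) * (k2 / V * real (y + 2) * real (y + 1))
         - p y * (k1 * V + k2 / V * real y * (real y - 1)) = 0"
proof (cases y)
  case 0
  have "(\<lambda>x. p x * qrate k1 k2 V x y) sums (\<Sum>x\<in>{0, 2}. p x * qrate k1 k2 V x y)"
    by (rule sums_finite) (auto simp: qrate_def 0)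
  then have "(\<Sum>x\<in>{0, 2}. p x * qrate k1 k2 V x y) = 0" using s sums_unique2 by blast
  then show ?thesis by (simp add: qrate_def 0 algebra_simps numeral_2_eq_2)
next
  case (Suc z)
  have "(\<lambda>x. p x * qrate k1 k2 V x y) sums (\<Sum>x\<in>{z, Suc z, Suc (Suc (Suc z))}. p x * qrate k1 k2 V x y)"
    by (rule sums_finite) (auto simp: qrate_def Suc)
  then have "(\<Sum>x\<in>{z, Suc z, Suc (Suc (Suc z))}. p x * qrate k1 k2 V x y) = 0"
    using s sums_unique2 by blast
  moreover have "Suc z \<noteq> z - Suc 0" by arith
  ultimately show ?thesis by (simp add: qrate_def Suc algebra_simps)
qed

text \<open>The balance equations telescope to the cut equation (induction over the cut position).\<close>
lemma stationary_cut_balanced: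
  fixes p :: "nat \<Rightarrow> real"
  assumes V: "V > 0" and k2: "k2 > 0" and s: "\<And>y. (\<lambda>x. p x * qrate k1 k2 V x y) sums 0"
  shows "cut_balanced (k1 * V\<^sup>2 / k2) p"
proof -
  let ?D = "k2 / V"
  have flux: "k1 * V * p y = ?D * real (y + 1) * real y * p (y + 1) + ?D * real (y + 1) * real (y + 2) * p (y + 2)" for y
  proof (induction y)
    case 0
    then show ?case using stationary_column[OF s, of 0] by (simp add: algebra_simps numeral_2_eq_2)
  next
    case (Suc y)
    have col: "p y * (k1 * V) + p (y + 3) * (?D * (real y + 3) * (real y + 2))
         - p (y + 1) * (k1 * V + ?D * (real y + 1) * real y) = 0"
      using stationary_column[OF s, of "Suc y"] by (simp add: algebra_simps numeral_3_eq_3)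
    have IH: "k1 * V * p y = ?D * (real y + 1) * real y * p (y + 1) + ?D * (real y + 1) * (real y + 2) * p (y + 2)"
      using Suc.IH by (simp add: algebra_simps)
    have "k1 * V * p (y + 1) = ?D * (real y + 2) * (real y + 1) * p (y + 2) + ?D * (real y + 2) * (real y + 3) * p (y + 3)"
      using IH col by algebra
    then show ?case by (simp add: algebra_simps numeral_3_eq_3)
  qed
  show ?thesis unfolding cut_balanced_def
  proof
    fix y
    have "k1 * V\<^sup>2 / k2 * p y = (V / k2) * (k1 * V * p y)"
      by (simp add: power2_eq_square)
    also have "\<dots> = real (y + 1) * real y * p (y + 1) + real (y + 1) * real (y + 2) * p (y + 2)"
      unfolding flux using V k2 by (simp add: field_simps)
    finally show "k1 * V\<^sup>2 / k2 * p y = real (y + 1) * real y * p (y + 1) + real (y + 1) * real (y + 2) * p (y + 2)" .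
  qed
qed

lemma cut_balanced_decay:
  fixes p :: "nat \<Rightarrow> real"
  assumes c: "c \<ge> 0" and r: "cut_balanced c p" and nn: "\<And>y. p y \<ge> 0"
  shows "p (y + 1) * (fact y * fact (y + 1)) \<le> p 1 * c ^ y"
proof (induction y)
  case 0
  then show ?case by simp
next
  case (Suc y)
  have e: "c * p (y + 1) = real (y + 2) * real (y + 1) * p (y + 2) + real (y + 2) * real (y + 3) * p (y + 3)"
    using r unfolding cut_balanced_def by (simp add: numeral_3_eq_3 numeral_2_eq_2 algebra_simps)
  have "real (y + 2) * real (y + 3) * p (y + 3) \<ge> 0" using nn by simp
  then have le: "real (y + 2) * real (y + 1) * p (y + 2) \<le> c * p (y + 1)" using e by linarith
  have "p (Suc y + 1) * (fact (Suc y) * fact (Suc y + 1))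
      = (real (y + 2) * real (y + 1) * p (y + 2)) * (fact y * fact (y + 1))"
    by (simp add: algebra_simps numeral_2_eq_2)
  also have "\<dots> \<le> (c * p (y + 1)) * (fact y * fact (y + 1))"
    by (rule mult_right_mono[OF le]) simp
  also have "\<dots> \<le> c * (p 1 * c ^ y)" using Suc.IH c by (simp add: mult.assoc mult_left_mono)
  finally show ?case by (simp add: ac_simps)
qed

lemma wronskian:
  fixes p q :: "nat \<Rightarrow> real"
  assumes rp: "cut_balanced c p" and rq: "cut_balanced c q"
  shows "(p y * q (y + 1) - p (y + 1) * q y) * (fact y * fact (y + 1)) = (- c) ^ y * (p 0 * q 1 - p 1 * q 0)"
proof (induction y)
  case 0
  then show ?case by simp
next
  case (Suc y)
  have "c * p y = real (y + 1) * real y * p (y + 1) + real (y + 1) * real (y + 2) * p (y + 2)"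
   and "c * q y = real (y + 1) * real y * q (y + 1) + real (y + 1) * real (y + 2) * q (y + 2)"
    using rp rq unfolding cut_balanced_def by blast+
  then have step: "(p (y + 1) * q (y + 2) - p (y + 2) * q (y + 1)) * (real (y + 1) * real (y + 2))
      = - c * (p y * q (y + 1) - p (y + 1) * q y)"
    by algebra
  have "(p (Suc y) * q (Suc y + 1) - p (Suc y + 1) * q (Suc y)) * (fact (Suc y) * fact (Suc y + 1))
      = ((p (y + 1) * q (y + 2) - p (y + 2) * q (y + 1)) * (real (y + 1) * real (y + 2))) * (fact y * fact (y + 1))"
    by (simp add: algebra_simps numeral_2_eq_2)
  also have "\<dots> = (- c) ^ Suc y * (p 0 * q 1 - p 1 * q 0)" unfolding step using Suc.IH by simp
  finally show ?case .
qed

lemma wronskian_bound: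
  fixes p q :: "nat \<Rightarrow> real"
  assumes c: "c > 0" and rp: "cut_balanced c p" and rq: "cut_balanced c q"
    and np: "\<And>y. p y \<ge> 0" and nq: "\<And>y. q y \<ge> 0"
  shows "\<bar>p 0 * q 1 - p 1 * q 0\<bar> \<le> 2 * p 1 * q 1 * (c ^ y / fact y)"
proof -
  define dp where "dp y = p (y + 1) * (fact y * fact (y + 1))" for y
  define dq where "dq y = q (y + 1) * (fact y * fact (y + 1))" for y
  have dp: "0 \<le> dp y" "dp y \<le> p 1 * c ^ y" for y
    using cut_balanced_decay[OF _ rp np, of y] c np unfolding dp_def by auto
  have dq: "0 \<le> dq y" "dq y \<le> q 1 * c ^ y" for y
    using cut_balanced_decay[OF _ rq nq, of y] c nq unfolding dq_def by auto
  have F: "fact y * fact (y + 1) > (0::real)" by simp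
  have "dp y * dq (y + 1) - dp (y + 1) * dq y
      = ((p (y + 1) * q (y + 1 + 1) - p (y + 1 + 1) * q (y + 1)) * (fact (y + 1) * fact (y + 1 + 1)))
        * (fact y * fact (y + 1))"
    unfolding dp_def dq_def by (simp only: left_diff_distrib right_diff_distrib mult_ac)
  also have "\<dots> = (- c) ^ (y + 1) * (p 0 * q 1 - p 1 * q 0) * (fact y * fact (y + 1))"
    unfolding wronskian[OF rp rq, of "y + 1"] ..
  finally have "\<bar>dp y * dq (y + 1) - dp (y + 1) * dq y\<bar>
      = \<bar>(- c) ^ (y + 1)\<bar> * \<bar>p 0 * q 1 - p 1 * q 0\<bar> * \<bar>fact y * fact (y + 1)\<bar>"
    by (simp only: abs_mult)
  also have "\<dots> = \<bar>p 0 * q 1 - p 1 * q 0\<bar> * (c ^ (y + 1) * (fact y * fact (y + 1)))"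
    using c F by (simp only: power_abs abs_minus_cancel abs_of_pos mult_ac)
  finally have "\<bar>p 0 * q 1 - p 1 * q 0\<bar> * (c ^ (y + 1) * (fact y * fact (y + 1)))
      = \<bar>dp y * dq (y + 1) - dp (y + 1) * dq y\<bar>" ..
  also have "\<dots> \<le> dp y * dq (y + 1) + dp (y + 1) * dq y"
    using dp dq by (simp add: abs_le_iff)
  also have "\<dots> \<le> (p 1 * c ^ y) * (q 1 * c ^ (y + 1)) + (p 1 * c ^ (y + 1)) * (q 1 * c ^ y)"
    by (intro add_mono mult_mono dp dq) (use np nq c in auto)
  also have "\<dots> = (2 * p 1 * q 1 * c ^ y / (fact y * fact (y + 1))) * (c ^ (y + 1) * (fact y * fact (y + 1)))"
    using F by (simp add: field_simps)
  finally have "\<bar>p 0 * q 1 - p 1 * q 0\<bar> \<le> 2 * p 1 * q 1 * c ^ y / (fact y * fact (y + 1))"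
    by (rule mult_right_le_imp_le) (use c F in simp)
  also have "\<dots> \<le> 2 * p 1 * q 1 * c ^ y / fact y"
    using np nq c by (intro divide_left_mono) (auto simp del: fact_Suc)
  finally show ?thesis by simp
qed

lemma wronskian_zero:
  fixes p q :: "nat \<Rightarrow> real"
  assumes c: "c > 0" and rp: "cut_balanced c p" and rq: "cut_balanced c q"
    and np: "\<And>y. p y \<ge> 0" and nq: "\<And>y. q y \<ge> 0"
  shows "p 0 * q 1 = p 1 * q 0"
proof -
  have "(\<lambda>y. inverse (fact y) * c ^ y) \<longlonglongrightarrow> 0"
    by (rule summable_LIMSEQ_zero[OF summable_exp])
  then have "(\<lambda>y. 2 * p 1 * q 1 * (c ^ y / fact y)) \<longlonglongrightarrow> 2 * p 1 * q 1 * 0"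
    by (intro tendsto_mult tendsto_const) (simp add: divide_inverse mult.commute)
  then have "\<bar>p 0 * q 1 - p 1 * q 0\<bar> \<le> 2 * p 1 * q 1 * 0"
    by (rule LIMSEQ_le_const) (use wronskian_bound[OF c rp rq np nq] in auto)
  then show ?thesis by simp
qed

text \<open>The cut equation is a second-order recursion, so solutions with \<open>W 0 = 0\<close> are proportional.\<close>
lemma cut_balanced_proportional:
  fixes p q :: "nat \<Rightarrow> real"
  assumes rp: "cut_balanced c p" and rq: "cut_balanced c q" and w: "p 0 * q 1 = p 1 * q 0"
  shows "p y * q 0 = p 0 * q y"
proof -
  define d where "d y = p y * q 0 - p 0 * q y" for y
  have rd: "c * d y = real (y + 1) * real y * d (y + 1) + real (y + 1) * real (y + 2) * d (y + 2)" for y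
  proof -
    have "c * p y = real (y + 1) * real y * p (y + 1) + real (y + 1) * real (y + 2) * p (y + 2)"
     and "c * q y = real (y + 1) * real y * q (y + 1) + real (y + 1) * real (y + 2) * q (y + 2)"
      using rp rq unfolding cut_balanced_def by blast+
    then show ?thesis unfolding d_def by algebra
  qed
  have "d y = 0 \<and> d (y + 1) = 0" for y
  proof (induction y)
    case 0
    then show ?case using w by (simp add: d_def mult.commute)
  next
    case (Suc y)
    then have "d (y + 2) = 0" using rd[of y] by simp
    then show ?case using Suc by (simp add: numeral_2_eq_2)
  qed
  then show ?thesis unfolding d_def by simp
qed

section \<open>The explicit stationary profile\<close>

text \<open>The coefficients \<open>c\<^sup>k / (k! (k + 1)!)\<close> of a modified Bessel series; their sum is at most \<open>exp (2\<surd>c)\<close>.\<close>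
definition bcoef :: "real \<Rightarrow> nat \<Rightarrow> real" where
  "bcoef c k = c ^ k / (fact k * fact (k + 1))"

lemma bcoef_nonneg: "c \<ge> 0 \<Longrightarrow> bcoef c k \<ge> 0"
  by (simp add: bcoef_def)

lemma bcoef_scale: "bcoef c k * t ^ (k + 1) = t * bcoef (c * t) k"
  by (simp add: bcoef_def power_mult_distrib)

lemma bcoef_shift: "c * bcoef c k = real (k + 1) * real (k + 2) * bcoef c (k + 1)"
proof -
  have f1: "fact (k + 1) = real (k + 1) * fact k" by simp
  have f2: "fact (k + 2) = real (k + 2) * (real (k + 1) * fact k)"
    by (simp add: numeral_2_eq_2 del: of_nat_Suc)
  show ?thesis unfolding bcoef_def f1 f2 by (simp add: field_simps del: of_nat_Suc)
qed

text \<open>Comparison with the exponential series via \<open>(2k choose k) \<le> 4\<^sup>k\<close>.\<close>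
lemma bcoef_le_exp_term:
  assumes b: "b \<ge> 0"
  shows "bcoef b k \<le> (2 * sqrt b) ^ (2 * k) / fact (2 * k)"
proof -
  have central: "fact k * fact k * real (2 * k choose k) = fact (2 * k)"
    using binomial_fact[of k "2 * k", where 'a = real] by (simp add: mult_2)
  have "real (2 * k choose k) \<le> 2 ^ (2 * k)"
    by (metis binomial_le_pow2 of_nat_le_iff of_nat_numeral of_nat_power)
  then have B: "real (2 * k choose k) \<le> 4 ^ k" by (simp add: power_mult)
  have F: "fact k * fact k \<le> (fact k * fact (k + 1) :: real)"
    by (intro mult_left_mono fact_mono) auto
  have "bcoef b k \<le> b ^ k / (fact k * fact k)"
    unfolding bcoef_def by (rule divide_left_mono[OF F]) (use b in auto)
  also have "\<dots> = 4 ^ k * b ^ k / (fact k * fact k * 4 ^ k)" by simp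
  also have "\<dots> \<le> 4 ^ k * b ^ k / (fact k * fact k * real (2 * k choose k))"
    by (rule divide_left_mono[OF mult_left_mono[OF B]]) (use b in \<open>auto intro!: mult_pos_pos\<close>)
  also have "\<dots> = (2 * sqrt b) ^ (2 * k) / fact (2 * k)"
    unfolding central using b by (simp add: power_mult power_mult_distrib)
  finally show ?thesis .
qed

lemma bcoef_summable_bound:
  assumes b: "b \<ge> 0"
  shows "summable (bcoef b)" and "suminf (bcoef b) \<le> exp (2 * sqrt b)"
proof -
  define g where "g j = (2 * sqrt b) ^ j / fact j" for j
  have gs: "g sums exp (2 * sqrt b)"
    using exp_converges[of "2 * sqrt b"] unfolding g_def by (simp add: divide_inverse mult.commute)
  have gnn: "g j \<ge> 0" for j using b by (simp add: g_def)
  have "(\<Sum>k<N. bcoef b k) \<le> (\<Sum>j<2 * N. g j)" for N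
  proof (induction N)
    case 0
    then show ?case by simp
  next
    case (Suc N)
    have "(\<Sum>k<Suc N. bcoef b k) \<le> (\<Sum>j<2 * N. g j) + g (2 * N) + g (2 * N + 1)"
      using Suc bcoef_le_exp_term[OF b, of N] gnn[of "2 * N + 1"] by (simp add: g_def)
    then show ?case by simp
  qed
  moreover have "(\<Sum>j<M. g j) \<le> exp (2 * sqrt b)" for M
    using sum_le_suminf[OF sums_summable[OF gs], of "{..<M}"] gnn sums_unique[OF gs] by auto
  ultimately have partial: "(\<Sum>k<N. bcoef b k) \<le> exp (2 * sqrt b)" for N
    by (meson order_trans)
  show sm: "summable (bcoef b)"
    by (rule bounded_imp_summable[OF bcoef_nonneg[OF b], of _ "exp (2 * sqrt b)"])
       (use partial[of "Suc _"] in \<open>simp add: lessThan_Suc_atMost\<close>)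
  show "suminf (bcoef b) \<le> exp (2 * sqrt b)"
    by (rule suminf_le_const[OF sm partial])
qed

lemma binomial_tilt:
  fixes t :: real
  assumes t: "t \<ge> 0"
  shows "real (n choose y) * t ^ y \<le> (1 + t) ^ n"
proof (cases "y \<le> n")
  case True
  have "real (n choose y) * t ^ y * 1 ^ (n - y) \<le> (\<Sum>k\<le>n. real (n choose k) * t ^ k * 1 ^ (n - k))"
    by (rule member_le_sum) (use True t in auto)
  also have "\<dots> = (t + 1) ^ n" by (rule binomial_ring[symmetric])
  finally show ?thesis by (simp add: add.commute)
next
  case False
  then show ?thesis using t by (simp add: binomial_eq_0)
qed

definition prof :: "real \<Rightarrow> nat \<Rightarrow> real" where
  "prof c y = (\<Sum>k. bcoef c k * real (Suc k choose y))"

text \<open>The series defining \<open>prof c y\<close> converges, since \<open>(k + 1 choose y) \<le> 2\<^sup>k\<^sup>+\<^sup>1\<close>.\<close>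
lemma prof_series_summable:
  assumes c: "c \<ge> 0"
  shows "summable (\<lambda>k. bcoef c k * real (Suc k choose y))"
proof (rule summable_comparison_test)
  show "summable (\<lambda>k. 2 * bcoef (c * 2) k)"
    using bcoef_summable_bound(1)[of "c * 2"] c by (intro summable_mult) auto
  show "\<exists>N. \<forall>n\<ge>N. norm (bcoef c n * real (Suc n choose y)) \<le> 2 * bcoef (c * 2) n"
  proof (intro exI allI impI)
    fix n :: nat
    have "real (Suc n choose y) \<le> 2 ^ (n + 1)"
      using binomial_tilt[of 1 "Suc n" y] by simp
    then have "bcoef c n * real (Suc n choose y) \<le> bcoef c n * 2 ^ (n + 1)"
      by (rule mult_left_mono) (rule bcoef_nonneg[OF c])
    then show "norm (bcoef c n * real (Suc n choose y)) \<le> 2 * bcoef (c * 2) n"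
      using bcoef_nonneg[OF c, of n] bcoef_scale[of c n 2] by simp
  qed
qed

lemma prof_term_le:
  assumes c: "c \<ge> 0"
  shows "bcoef c k * real (Suc k choose y) \<le> prof c y"
  unfolding prof_def
  using sum_le_suminf[OF prof_series_summable[OF c], of "{k}"] bcoef_nonneg[OF c] by auto

lemma prof_pos:
  assumes c: "c > 0"
  shows "prof c y > 0"
proof -
  have "0 < bcoef c y * real (Suc y choose y)" using c by (simp add: bcoef_def)
  also have "\<dots> \<le> prof c y" using prof_term_le[of c y y] c by simp
  finally show ?thesis .
qed

lemma prof_single_term:
  assumes c: "c \<ge> 0" and yk: "y \<le> k + 1"
  shows "c ^ k / (fact k * fact y * fact (k + 1 - y)) \<le> prof c y"
proof -
  have "real (Suc k choose y) = fact (Suc k) / (fact y * fact (Suc k - y))"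
    by (rule binomial_fact) (use yk in simp)
  then have "bcoef c k * real (Suc k choose y) = c ^ k / (fact k * fact y * fact (k + 1 - y))"
    by (simp add: bcoef_def del: fact_Suc)
  then show ?thesis using prof_term_le[OF c, of k y] by simp
qed

lemma prof_tilt:
  assumes c: "c \<ge> 0" and t: "t \<ge> 0"
  shows "prof c y * t ^ y \<le> (1 + t) * exp (2 * sqrt (c * (1 + t)))"
proof -
  have c1: "c * (1 + t) \<ge> 0" using c t by simp
  have "prof c y * t ^ y = (\<Sum>k. bcoef c k * real (Suc k choose y) * t ^ y)"
    unfolding prof_def by (rule suminf_mult2[OF prof_series_summable[OF c]])
  also have "\<dots> \<le> (\<Sum>k. (1 + t) * bcoef (c * (1 + t)) k)"
  proof (rule suminf_le)
    show "summable (\<lambda>k. bcoef c k * real (Suc k choose y) * t ^ y)"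
      by (rule summable_mult2[OF prof_series_summable[OF c]])
    show "summable (\<lambda>k. (1 + t) * bcoef (c * (1 + t)) k)"
      using bcoef_summable_bound(1)[OF c1] by (rule summable_mult)
    fix k
    have "bcoef c k * real (Suc k choose y) * t ^ y \<le> bcoef c k * (1 + t) ^ (k + 1)"
      unfolding mult.assoc
      by (rule mult_left_mono[OF _ bcoef_nonneg[OF c]]) (use binomial_tilt[OF t, of "Suc k" y] in simp)
    then show "bcoef c k * real (Suc k choose y) * t ^ y \<le> (1 + t) * bcoef (c * (1 + t)) k"
      by (simp only: bcoef_scale)
  qed
  also have "\<dots> = (1 + t) * suminf (bcoef (c * (1 + t)))"
    using bcoef_summable_bound(1)[OF c1] by (rule suminf_mult)
  also have "\<dots> \<le> (1 + t) * exp (2 * sqrt (c * (1 + t)))"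
    using bcoef_summable_bound(2)[OF c1] t by (intro mult_left_mono) auto
  finally show ?thesis .
qed

lemma binomial_partial_row: "(\<Sum>y<Y. real (n choose y)) \<le> 2 ^ n"
proof -
  have "(\<Sum>y<Y. (n choose y)) \<le> (\<Sum>y<Y + n + 1. (n choose y))" by (rule sum_mono2) auto
  also have "\<dots> = (\<Sum>y\<le>n. (n choose y))" by (rule sum.mono_neutral_right) auto
  also have "\<dots> = 2 ^ n" by (rule choose_row_sum)
  finally show ?thesis by (metis of_nat_le_iff of_nat_numeral of_nat_power of_nat_sum)
qed

text \<open>Summing the profile over \<open>y\<close> replaces the binomial coefficient by at most \<open>2\<^sup>k\<^sup>+\<^sup>1\<close> \<dots>\<close>
lemma prof_partial_sums:
  assumes c: "c \<ge> 0"
  shows "(\<Sum>y<Y. prof c y) \<le> 2 * exp (2 * sqrt (2 * c))"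
proof -
  have c2: "c * 2 \<ge> 0" using c by simp
  have "(\<Sum>y<Y. prof c y) = (\<Sum>k. \<Sum>y<Y. bcoef c k * real (Suc k choose y))"
    unfolding prof_def by (rule suminf_sum[symmetric]) (rule prof_series_summable[OF c])
  also have "\<dots> \<le> (\<Sum>k. 2 * bcoef (c * 2) k)"
  proof (rule suminf_le)
    show "summable (\<lambda>k. \<Sum>y<Y. bcoef c k * real (Suc k choose y))"
      by (rule summable_sum) (rule prof_series_summable[OF c])
    show "summable (\<lambda>k. 2 * bcoef (c * 2) k)"
      using bcoef_summable_bound(1)[OF c2] by (rule summable_mult)
    fix k
    have "(\<Sum>y<Y. bcoef c k * real (Suc k choose y)) = bcoef c k * (\<Sum>y<Y. real (Suc k choose y))"
      by (simp add: sum_distrib_left)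
    also have "\<dots> \<le> bcoef c k * 2 ^ (k + 1)"
      by (rule mult_left_mono[OF _ bcoef_nonneg[OF c]])
         (use binomial_partial_row[where n = "Suc k" and Y = Y] in simp)
    also have "\<dots> = 2 * bcoef (c * 2) k" by (rule bcoef_scale)
    finally show "(\<Sum>y<Y. bcoef c k * real (Suc k choose y)) \<le> 2 * bcoef (c * 2) k" .
  qed
  also have "\<dots> = 2 * suminf (bcoef (c * 2))"
    using bcoef_summable_bound(1)[OF c2] by (rule suminf_mult)
  also have "\<dots> \<le> 2 * exp (2 * sqrt (2 * c))"
    using bcoef_summable_bound(2)[OF c2] by (simp add: mult.commute)
  finally show ?thesis .
qed

lemma prof_summable:
  assumes c: "c \<ge> 0"
  shows "summable (prof c)" and "suminf (prof c) \<le> 2 * exp (2 * sqrt (2 * c))"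
proof -
  have nn: "prof c y \<ge> 0" for y
    using prof_term_le[OF c, of y y] bcoef_nonneg[OF c, of y] by (meson order_trans zero_le_mult_iff of_nat_0_le_iff)
  show sm: "summable (prof c)"
    by (rule bounded_imp_summable[OF nn, of _ "2 * exp (2 * sqrt (2 * c))"])
       (use prof_partial_sums[OF c, of "Suc _"] in \<open>simp add: lessThan_Suc_atMost\<close>)
  show "suminf (prof c) \<le> 2 * exp (2 * sqrt (2 * c))"
    by (rule suminf_le_const[OF sm prof_partial_sums[OF c]])
qed

lemma binomial_cut_identity:
  "(y + 1) * y * (Suc k choose Suc y) + (y + 1) * (y + 2) * (Suc k choose (y + 2)) = k * (k + 1) * (k choose y)"
proof -
  have h1: "Suc y * (Suc k choose Suc y) = Suc k * (k choose y)" by (rule Suc_times_binomial)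
  have h2: "Suc (Suc y) * (Suc k choose Suc (Suc y)) = Suc k * (k choose Suc y)" by (rule Suc_times_binomial)
  have h3: "Suc y * (k choose Suc y) = (k - y) * (k choose y)"
  proof (cases k)
    case 0
    then show ?thesis by (cases y) auto
  next
    case (Suc k')
    have "Suc y * (k choose Suc y) = k * ((k - 1) choose y)" using Suc_times_binomial[of y k'] Suc by simp
    also have "\<dots> = (k - y) * (k choose y)" by (rule binomial_absorb_comp[symmetric])
    finally show ?thesis .
  qed
  have h4: "y * (k choose y) + (k - y) * (k choose y) = k * (k choose y)"
  proof (cases "y \<le> k")
    case True
    then show ?thesis by (metis add_mult_distrib le_add_diff_inverse)
  next
    case False
    then show ?thesis by (simp add: binomial_eq_0)
  qed
  have "(y + 1) * y * (Suc k choose Suc y) = Suc k * (y * (k choose y))"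
    using h1 by (metis Suc_eq_plus1 mult.assoc mult.commute)
  moreover have "(y + 1) * (y + 2) * (Suc k choose (y + 2)) = Suc k * ((k - y) * (k choose y))"
    using h2 h3 by (metis Suc_eq_plus1 add_2_eq_Suc' mult.assoc mult.commute)
  ultimately show ?thesis using h4 by (metis add_mult_distrib2 Suc_eq_plus1 mult.assoc mult.commute)
qed

lemma prof_cut_balanced:
  assumes c: "c \<ge> 0"
  shows "cut_balanced c (prof c)"
  unfolding cut_balanced_def
proof
  fix y
  let ?t = "\<lambda>j k. bcoef c k * real (Suc k choose j)"
  define f where "f n = real n * real (n + 1) * bcoef c n * real (n choose y)" for n
  have fSuc: "f (Suc k) = c * ?t y k" for k
  proof -
    have "f (Suc k) = (real (k + 1) * real (k + 2) * bcoef c (k + 1)) * real (Suc k choose y)"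
      unfolding f_def by (simp del: of_nat_Suc add: numeral_2_eq_2)
    then show ?thesis unfolding bcoef_shift[symmetric] by simp
  qed
  have "summable (\<lambda>k. f (Suc k))" unfolding fSuc by (intro summable_mult prof_series_summable[OF c])
  then have sf: "summable f" by (simp add: summable_Suc_iff)
  have lhs: "c * prof c y = suminf f"
  proof -
    have "c * prof c y = (\<Sum>k. f (Suc k))"
      unfolding fSuc prof_def by (rule suminf_mult[symmetric, OF prof_series_summable[OF c]])
    also have "\<dots> = suminf f - f 0" by (rule suminf_split_head[OF sf])
    finally show ?thesis by (simp add: f_def)
  qed
  have termwise: "?t (Suc y) k * (real (y + 1) * real y) + ?t (y + 2) k * (real (y + 1) * real (y + 2)) = f k" for k
  proof -
    have E: "real (y + 1) * real y * real (Suc k choose Suc y) + real (y + 1) * real (y + 2) * real (Suc k choose (y + 2))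
       = real k * real (k + 1) * real (k choose y)"
      using arg_cong[OF binomial_cut_identity[of y k], of real] by (simp only: of_nat_add of_nat_mult)
    have "?t (Suc y) k * (real (y + 1) * real y) + ?t (y + 2) k * (real (y + 1) * real (y + 2))
      = bcoef c k * (real (y + 1) * real y * real (Suc k choose Suc y)
          + real (y + 1) * real (y + 2) * real (Suc k choose (y + 2)))"
      by (simp only: distrib_left mult_ac)
    then show ?thesis unfolding E f_def by (simp only: mult_ac)
  qed
  have "real (y + 1) * real y * prof c (y + 1) + real (y + 1) * real (y + 2) * prof c (y + 2)
      = (\<Sum>k. ?t (Suc y) k) * (real (y + 1) * real y) + (\<Sum>k. ?t (y + 2) k) * (real (y + 1) * real (y + 2))"
    unfolding prof_def by simp
  also have "\<dots> = (\<Sum>k. ?t (Suc y) k * (real (y + 1) * real y) + ?t (y + 2) k * (real (y + 1) * real (y + 2)))"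
    by (simp only: suminf_mult2[OF prof_series_summable[OF c]] suminf_add[OF summable_mult2 summable_mult2,
        OF prof_series_summable[OF c] prof_series_summable[OF c]])
  also have "\<dots> = suminf f" unfolding termwise ..
  finally show "c * prof c y = real (y + 1) * real y * prof c (y + 1) + real (y + 1) * real (y + 2) * prof c (y + 2)"
    using lhs by simp
qed

lemma stationary_dist_eq_prof:
  fixes p :: "nat \<Rightarrow> real"
  assumes k1: "k1 > 0" and k2: "k2 > 0" and V: "V > 0" and st: "stationary_dist k1 k2 V p"
  defines "c \<equiv> k1 * V\<^sup>2 / k2"
  shows "p y = prof c y / suminf (prof c)"
proof -
  have c: "c > 0" using k1 k2 V by (simp add: c_def)
  have nn: "\<And>x. 0 \<le> p x" and total: "p sums 1" and bal: "\<And>y. (\<lambda>x. p x * qrate k1 k2 V x y) sums 0"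
    using st unfolding stationary_dist_def by auto
  have rp: "cut_balanced c p" unfolding c_def by (rule stationary_cut_balanced[OF V k2 bal])
  have rq: "cut_balanced c (prof c)" using prof_cut_balanced c by simp
  have qpos: "prof c x > 0" for x by (rule prof_pos[OF c])
  have proportional: "p x * prof c 0 = p 0 * prof c x" for x
    using cut_balanced_proportional[OF rp rq wronskian_zero[OF c rp rq nn]] qpos less_imp_le by blast
  define L where "L = p 0 / prof c 0"
  have pL: "p = (\<lambda>x. L * prof c x)"
    using proportional qpos[of 0] by (auto simp: L_def field_simps fun_eq_iff)
  have "(\<lambda>x. L * prof c x) sums (L * suminf (prof c))"
    using prof_summable(1) c by (intro sums_mult summable_sums) simp
  then have "L * suminf (prof c) = 1" using total pL sums_unique2 by blast
  then have "L = 1 / suminf (prof c)" by (metis eq_divide_eq mult.commute mult_zero_right zero_neq_one)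
  then show ?thesis unfolding pL by simp
qed

section \<open>Logarithmic asymptotics\<close>

text \<open>The positive root \<open>w\<close> of \<open>w (w + x) = a\<^sup>2\<close>; the dominant term of \<open>prof\<close> at \<open>y \<approx> xV\<close>
  has index \<open>k \<approx> (w + x) V\<close>.\<close>
definition wroot :: "real \<Rightarrow> real \<Rightarrow> real" where
  "wroot a x = (sqrt (x\<^sup>2 + 4 * a\<^sup>2) - x) / 2"

lemma wroot:
  fixes a x :: real
  assumes a: "a > 0" and x: "x \<ge> 0"
  shows "wroot a x > 0" and "wroot a x * (wroot a x + x) = a\<^sup>2"
proof -
  let ?s = "sqrt (x\<^sup>2 + 4 * a\<^sup>2)"
  have s2: "?s\<^sup>2 = x\<^sup>2 + 4 * a\<^sup>2" by (simp add: add_nonneg_nonneg)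
  have "x\<^sup>2 < x\<^sup>2 + 4 * a\<^sup>2" using a by simp
  then have "x < ?s" using x by (metis real_less_rsqrt)
  then show "wroot a x > 0" by (simp add: wroot_def)
  have "wroot a x * (wroot a x + x) = (?s\<^sup>2 - x\<^sup>2) / 4"
    by (simp add: wroot_def power2_eq_square field_simps)
  then show "wroot a x * (wroot a x + x) = a\<^sup>2" using s2 by simp
qed

text \<open>The exponential growth rate of the profile: \<open>ln (prof (a\<^sup>2 V\<^sup>2) y) \<approx> V prof_rate a (y/V)\<close>.\<close>
definition prof_rate :: "real \<Rightarrow> real \<Rightarrow> real" where
  "prof_rate a x = x * ln (wroot a x / x) + 2 * (wroot a x + x)"

lemma lyap_eq_prof_rate:
  fixes a x :: real
  assumes a: "a > 0" and x: "x > 0"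
  shows "lyap a x = 2 * sqrt 2 * a - prof_rate a x"
proof -
  let ?s = "sqrt (x\<^sup>2 + 4 * a\<^sup>2)" and ?w = "wroot a x"
  have w: "?w > 0" and ww: "?w * (?w + x) = a\<^sup>2" using wroot[OF a] x by auto
  have s: "?s = 2 * ?w + x" by (simp add: wroot_def field_simps)
  have "ln ?w + ln (x + ?s) = ln 2 + 2 * ln a"
  proof -
    have "?w * (x + ?s) = 2 * a\<^sup>2" unfolding s using ww by (simp add: algebra_simps)
    then have "ln (?w * (x + ?s)) = ln 2 + 2 * ln a" using a by (simp add: ln_mult ln_realpow)
    then show ?thesis using w x by (simp add: ln_mult add_pos_pos s)
  qed
  moreover have "ln (?w / x) = ln ?w - ln x" using w x by (simp add: ln_div)
  ultimately have "ln x + ln (?w / x) + ln (x + ?s) = ln 2 + 2 * ln a" by linarith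
  then have "x * ln x + x * ln (?w / x) + x * ln (x + ?s) = x * (ln 2 + 2 * ln a)"
    by (simp flip: distrib_left)
  then show ?thesis
    unfolding lyap_def prof_rate_def s by (simp add: algebra_simps)
qed

lemma prof_rate_equilibrium:
  fixes a :: real
  assumes a: "a > 0"
  shows "prof_rate a (a / sqrt 2) = 2 * sqrt 2 * a"
  using lyap_eq_prof_rate[OF a, of "a / sqrt 2"] lyap_equilibrium[OF a] a by simp

text \<open>An upper bound for \<open>ln n!\<close> with the Stirling asymptotics \<open>n ln n - n\<close>.\<close>
definition lfact_bound :: "nat \<Rightarrow> real" where
  "lfact_bound n = (real n + 1) * ln (real n + 1) - real n"

text \<open>Proof by induction, using \<open>ln (1 + 1/(n + 1)) \<ge> 1/(n + 2)\<close>.\<close>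
lemma ln_fact_le: "ln (fact n :: real) \<le> lfact_bound n"
proof (induction n)
  case 0
  then show ?case by (simp add: lfact_bound_def)
next
  case (Suc n)
  have step: "1 \<le> (real n + 2) * (ln (real n + 2) - ln (real n + 1))"
  proof -
    have "ln ((real n + 1) / (real n + 2)) \<le> (real n + 1) / (real n + 2) - 1"
      by (rule ln_le_minus_one) simp
    also have "\<dots> = - (1 / (real n + 2))" by (simp add: field_simps)
    finally have "1 / (real n + 2) \<le> ln (real n + 2) - ln (real n + 1)" by (simp add: ln_div)
    then show ?thesis by (simp add: field_simps)
  qed
  have "ln (fact (Suc n) :: real) = ln (real n + 1) + ln (fact n)"
    by (simp add: ln_mult add.commute)
  also have "\<dots> \<le> (real n + 2) * ln (real n + 1) - real n"
    using Suc.IH by (simp add: lfact_bound_def algebra_simps)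
  also have "\<dots> \<le> lfact_bound (Suc n)"
    using step by (simp add: lfact_bound_def algebra_simps)
  finally show ?case .
qed

lemma floor_scaled_ratio:
  fixes V :: "nat \<Rightarrow> real"
  assumes r: "r \<ge> 0" and Vp: "\<And>n. V n > 0" and Vlim: "filterlim V at_top sequentially"
  shows "(\<lambda>n. real (nat \<lfloor>r * V n\<rfloor>) / V n) \<longlonglongrightarrow> r"
proof (rule tendsto_sandwich[where f = "\<lambda>n. r - 1 / V n" and h = "\<lambda>n. r"])
  have "(\<lambda>n. 1 / V n) \<longlonglongrightarrow> 0"
    using tendsto_inverse_0_at_top[OF Vlim] by (simp add: divide_inverse)
  then show "(\<lambda>n. r - 1 / V n) \<longlonglongrightarrow> r" using tendsto_diff[OF tendsto_const] by fastforce
  have fl: "r * V n - 1 \<le> real (nat \<lfloor>r * V n\<rfloor>) \<and> real (nat \<lfloor>r * V n\<rfloor>) \<le> r * V n" for n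
    using r Vp[of n] by (simp add: of_nat_nat)
  have "r - 1 / V n = (r * V n - 1) / V n" and "r = r * V n / V n" for n
    using Vp[of n] by (simp_all add: field_simps)
  then have "r - 1 / V n \<le> real (nat \<lfloor>r * V n\<rfloor>) / V n \<and> real (nat \<lfloor>r * V n\<rfloor>) / V n \<le> r" for n
    using fl[of n] Vp[of n] by (metis divide_right_mono less_eq_real_def)
  then show "\<forall>\<^sub>F n in sequentially. r - 1 / V n \<le> real (nat \<lfloor>r * V n\<rfloor>) / V n"
   and "\<forall>\<^sub>F n in sequentially. real (nat \<lfloor>r * V n\<rfloor>) / V n \<le> r"
    by (simp_all add: always_eventually)
qed simp

lemma lfact_bound_rate:
  fixes V :: "nat \<Rightarrow> real" and \<nu> :: "nat \<Rightarrow> nat"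
  assumes Vp: "\<And>n. V n > 0" and Vlim: "filterlim V at_top sequentially"
    and lim: "(\<lambda>n. real (\<nu> n) / V n) \<longlonglongrightarrow> r" and r: "r > 0"
  shows "(\<lambda>n. (lfact_bound (\<nu> n) - real (\<nu> n) * ln (V n)) / V n) \<longlonglongrightarrow> r * ln r - r"
proof -
  have iv: "(\<lambda>n. 1 / V n) \<longlonglongrightarrow> 0"
    using tendsto_inverse_0_at_top[OF Vlim] by (simp add: divide_inverse)
  have lnV: "(\<lambda>n. ln (V n) / V n) \<longlonglongrightarrow> 0"
    by (rule filterlim_compose[OF ln_x_over_x_tendsto_0 Vlim])
  have lim1: "(\<lambda>n. (real (\<nu> n) + 1) / V n) \<longlonglongrightarrow> r"
    using tendsto_add[OF lim iv] by (simp add: add_divide_distrib)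
  have eq: "(lfact_bound (\<nu> n) - real (\<nu> n) * ln (V n)) / V n
      = (real (\<nu> n) + 1) / V n * ln ((real (\<nu> n) + 1) / V n) + ln (V n) / V n - real (\<nu> n) / V n" for n
    using Vp[of n] by (simp add: lfact_bound_def ln_div add_pos_pos field_simps)
  have "(\<lambda>n. (real (\<nu> n) + 1) / V n * ln ((real (\<nu> n) + 1) / V n) + ln (V n) / V n - real (\<nu> n) / V n)
      \<longlonglongrightarrow> r * ln r + 0 - r"
    by (intro tendsto_intros lim1 lnV lim) (use r in auto)
  then show ?thesis unfolding eq by simp
qed

lemma prof_log_lower:
  assumes c: "c > 0" and yk: "y \<le> k + 1"
  shows "real k * ln c - lfact_bound k - lfact_bound y - lfact_bound (k + 1 - y) \<le> ln (prof c y)"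
proof -
  let ?F = "fact k * fact y * fact (k + 1 - y) :: real"
  have F: "?F > 0" by simp
  have "real k * ln c - lfact_bound k - lfact_bound y - lfact_bound (k + 1 - y)
      \<le> real k * ln c - ln (fact k) - ln (fact y) - ln (fact (k + 1 - y))"
    using ln_fact_le[of k] ln_fact_le[of y] ln_fact_le[of "k + 1 - y"] by linarith
  also have "\<dots> = ln (c ^ k / ?F)"
    using c F by (simp add: ln_div ln_mult ln_realpow)
  also have "\<dots> \<le> ln (prof c y)"
    using c F by (intro ln_mono prof_single_term yk) auto
  finally show ?thesis .
qed

text \<open>The rate identity behind the lower bound: with \<open>w = wroot a x\<close> and \<open>u = w + x\<close>
  (so \<open>u w = a\<^sup>2\<close>), the exponent of the dominant term \<open>k \<approx> uV\<close> equals \<open>prof_rate a x\<close>.\<close>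
lemma prof_rate_via_dominant_term:
  fixes a x :: real
  assumes a: "a > 0" and x: "x > 0"
  defines "w \<equiv> wroot a x"
  shows "2 * (w + x) * ln a - ((w + x) * ln (w + x) - (w + x)) - (x * ln x - x) - (w * ln w - w)
    = prof_rate a x"
proof -
  have w: "w > 0" and uw: "w * (w + x) = a\<^sup>2" using wroot[OF a] x by (auto simp: w_def)
  have "ln (a\<^sup>2) = ln (w * (w + x))" using uw by simp
  then have "2 * ln a = ln w + ln (w + x)" using a w x by (simp add: ln_mult ln_realpow)
  then have "2 * (w + x) * ln a = (w + x) * ln w + (w + x) * ln (w + x)"
    by (metis distrib_left mult.assoc mult.commute)
  moreover have "x * ln (w / x) = x * ln w - x * ln x" using w x by (simp add: ln_div algebra_simps)
  ultimately show ?thesis unfolding prof_rate_def w_def[symmetric] by (simp add: algebra_simps)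
qed

lemma index_gap:
  fixes V :: "nat \<Rightarrow> real" and k y :: "nat \<Rightarrow> nat"
  assumes Vp: "\<And>n. V n > 0" and Vlim: "filterlim V at_top sequentially"
    and kl: "(\<lambda>n. real (k n) / V n) \<longlonglongrightarrow> u" and yl: "(\<lambda>n. real (y n) / V n) \<longlonglongrightarrow> x"
    and xu: "x < u"
  shows "\<forall>\<^sub>F n in sequentially. y n \<le> k n + 1"
    and "(\<lambda>n. real (k n + 1 - y n) / V n) \<longlonglongrightarrow> u - x"
proof -
  have "(\<lambda>n. real (k n) / V n - real (y n) / V n) \<longlonglongrightarrow> u - x"
    by (intro tendsto_diff kl yl)
  then have "\<forall>\<^sub>F n in sequentially. 0 < real (k n) / V n - real (y n) / V n"
    using xu by (intro order_tendstoD(1)) auto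
  then show yk: "\<forall>\<^sub>F n in sequentially. y n \<le> k n + 1"
  proof (rule eventually_mono)
    fix n assume "0 < real (k n) / V n - real (y n) / V n"
    then have "real (y n) < real (k n)" using Vp[of n] by (simp add: divide_less_cancel)
    then show "y n \<le> k n + 1" by simp
  qed
  have "(\<lambda>n. real (k n) / V n + 1 / V n - real (y n) / V n) \<longlonglongrightarrow> u + 0 - x"
    using tendsto_inverse_0_at_top[OF Vlim]
    by (intro tendsto_intros kl yl) (simp add: divide_inverse)
  moreover have "\<forall>\<^sub>F n in sequentially.
      real (k n) / V n + 1 / V n - real (y n) / V n = real (k n + 1 - y n) / V n"
    using yk by eventually_elim (simp add: of_nat_diff add_divide_distrib diff_divide_distrib)
  ultimately show "(\<lambda>n. real (k n + 1 - y n) / V n) \<longlonglongrightarrow> u - x"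
    by (simp add: Lim_transform_eventually)
qed

text \<open>Lower half of the profile asymptotics: keep only the dominant term \<open>k \<approx> (w + x) V\<close>
  of the series defining \<open>prof\<close> and apply the Stirling bounds to its three factorials.\<close>
lemma prof_rate_lower:
  fixes V :: "nat \<Rightarrow> real" and y :: "nat \<Rightarrow> nat" and a x :: real
  assumes a: "a > 0" and Vp: "\<And>n. V n > 0" and Vlim: "filterlim V at_top sequentially"
    and ylim: "(\<lambda>n. real (y n) / V n) \<longlonglongrightarrow> x" and x: "x > 0"
  obtains L where "L \<longlonglongrightarrow> prof_rate a x"
    and "\<forall>\<^sub>F n in sequentially. L n \<le> ln (prof (a\<^sup>2 * (V n)\<^sup>2) (y n)) / V n"
proof -
  define w where "w = wroot a x"
  have w: "w > 0" using wroot[OF a] x by (simp add: w_def)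
  define k where "k n = nat \<lfloor>(w + x) * V n\<rfloor>" for n
  have kl: "(\<lambda>n. real (k n) / V n) \<longlonglongrightarrow> w + x"
    unfolding k_def by (rule floor_scaled_ratio) (use w x Vp Vlim in auto)
  have yk: "\<forall>\<^sub>F n in sequentially. y n \<le> k n + 1"
    and Jl: "(\<lambda>n. real (k n + 1 - y n) / V n) \<longlonglongrightarrow> w"
    using index_gap[OF Vp Vlim kl ylim] w by auto
  define \<psi> where "\<psi> m n = (lfact_bound m - real m * ln (V n)) / V n" for m n
  define L where "L n = 2 * (real (k n) / V n) * ln a - \<psi> (k n) n - \<psi> (y n) n - \<psi> (k n + 1 - y n) n
    - ln (V n) / V n" for n
  show ?thesis
  proof
    have "L \<longlonglongrightarrow> 2 * (w + x) * ln a - ((w + x) * ln (w + x) - (w + x)) - (x * ln x - x) - (w * ln w - w) - 0"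
      unfolding L_def \<psi>_def
      by (intro tendsto_intros kl lfact_bound_rate[OF Vp Vlim] ylim Jl
          filterlim_compose[OF ln_x_over_x_tendsto_0 Vlim]) (use w x in auto)
    then show "L \<longlonglongrightarrow> prof_rate a x"
      using prof_rate_via_dominant_term[OF a x] by (simp add: w_def)
    show "\<forall>\<^sub>F n in sequentially. L n \<le> ln (prof (a\<^sup>2 * (V n)\<^sup>2) (y n)) / V n"
      using yk
    proof eventually_elim
      case (elim n)
      have c: "a\<^sup>2 * (V n)\<^sup>2 > 0" using a Vp[of n] by simp
      have "ln (a\<^sup>2 * (V n)\<^sup>2) = 2 * ln a + 2 * ln (V n)"
        using a Vp[of n] by (simp add: ln_mult ln_realpow)
      moreover have "real (k n + 1 - y n) = real (k n) + 1 - real (y n)" using elim by (simp add: of_nat_diff)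
      ultimately have "L n = (real (k n) * ln (a\<^sup>2 * (V n)\<^sup>2) - lfact_bound (k n) - lfact_bound (y n)
          - lfact_bound (k n + 1 - y n)) / V n"
        using Vp[of n] by (simp add: L_def \<psi>_def field_simps)
      also have "\<dots> \<le> ln (prof (a\<^sup>2 * (V n)\<^sup>2) (y n)) / V n"
        using prof_log_lower[OF c elim] Vp[of n] by (simp add: divide_right_mono)
      finally show ?case .
    qed
  qed
qed

lemma prof_log_upper:
  assumes c: "c > 0" and t: "t > 0"
  shows "ln (prof c y) \<le> ln (1 + t) + 2 * sqrt (c * (1 + t)) - real y * ln t"
proof -
  have "ln (prof c y * t ^ y) \<le> ln ((1 + t) * exp (2 * sqrt (c * (1 + t))))"
    using prof_tilt[of c t y] prof_pos[OF c, of y] c t by (intro ln_mono) auto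
  then show ?thesis using prof_pos[OF c, of y] t by (simp add: ln_mult ln_realpow)
qed

text \<open>The rate identity behind the upper bound: the optimal tilt is \<open>t = x / wroot a x\<close>.\<close>
lemma prof_rate_via_tilt:
  fixes a x :: real
  assumes a: "a > 0" and x: "x > 0"
  defines "w \<equiv> wroot a x"
  shows "2 * a * sqrt (1 + x / w) - x * ln (x / w) = prof_rate a x"
proof -
  have w: "w > 0" and uw: "w * (w + x) = a\<^sup>2" using wroot[OF a] x by (auto simp: w_def)
  have "a\<^sup>2 * (1 + x / w) = (w + x)\<^sup>2" using w uw[symmetric] by (simp add: power2_eq_square field_simps)
  then have "a * sqrt (1 + x / w) = w + x"
    using a w x by (metis abs_of_pos add_pos_pos real_sqrt_abs real_sqrt_mult)
  moreover have "x * ln (x / w) = - (x * ln (w / x))" using w x by (simp add: ln_div algebra_simps)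
  ultimately show ?thesis unfolding prof_rate_def w_def[symmetric] by simp
qed

lemma prof_rate:
  fixes V :: "nat \<Rightarrow> real" and y :: "nat \<Rightarrow> nat" and a x :: real
  assumes a: "a > 0" and Vp: "\<And>n. V n > 0" and Vlim: "filterlim V at_top sequentially"
    and ylim: "(\<lambda>n. real (y n) / V n) \<longlonglongrightarrow> x" and x: "x > 0"
  shows "(\<lambda>n. ln (prof (a\<^sup>2 * (V n)\<^sup>2) (y n)) / V n) \<longlonglongrightarrow> prof_rate a x"
proof -
  obtain L where L: "L \<longlonglongrightarrow> prof_rate a x"
    and below: "\<forall>\<^sub>F n in sequentially. L n \<le> ln (prof (a\<^sup>2 * (V n)\<^sup>2) (y n)) / V n"
    using prof_rate_lower[OF a Vp Vlim ylim x] by blast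
  define t where "t = x / wroot a x"
  have t: "t > 0" using wroot(1)[OF a] x by (simp add: t_def)
  define U where "U n = ln (1 + t) * (1 / V n) + 2 * a * sqrt (1 + t) - real (y n) / V n * ln t" for n
  have "U \<longlonglongrightarrow> ln (1 + t) * 0 + 2 * a * sqrt (1 + t) - x * ln t"
    unfolding U_def using tendsto_inverse_0_at_top[OF Vlim]
    by (intro tendsto_intros ylim) (simp add: divide_inverse)
  then have U: "U \<longlonglongrightarrow> prof_rate a x"
    using prof_rate_via_tilt[OF a x] by (simp add: t_def)
  have above: "ln (prof (a\<^sup>2 * (V n)\<^sup>2) (y n)) / V n \<le> U n" for n
  proof -
    have "sqrt (a\<^sup>2 * (V n)\<^sup>2 * (1 + t)) = a * V n * sqrt (1 + t)"
      using a Vp[of n] t by (simp add: real_sqrt_mult)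
    then have "ln (prof (a\<^sup>2 * (V n)\<^sup>2) (y n)) \<le> ln (1 + t) + 2 * a * V n * sqrt (1 + t) - real (y n) * ln t"
      using prof_log_upper[of "a\<^sup>2 * (V n)\<^sup>2" t "y n"] a Vp[of n] t by simp
    then have "ln (prof (a\<^sup>2 * (V n)\<^sup>2) (y n)) / V n
        \<le> (ln (1 + t) + 2 * a * V n * sqrt (1 + t) - real (y n) * ln t) / V n"
      using Vp[of n] by (simp add: divide_right_mono)
    also have "\<dots> = U n" using Vp[of n] by (simp add: U_def field_simps)
    finally show ?thesis .
  qed
  show ?thesis
    by (rule tendsto_sandwich[OF below always_eventually L U]) (use above in blast)
qed

text \<open>The upper bound is \<open>prof_summable\<close>; the lower bound keeps the single state \<open>y \<approx> x\<^sup>*V\<close>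
  where \<open>prof_rate\<close> attains the value \<open>2\<surd>2 a\<close>.\<close>
lemma partition_rate:
  fixes V :: "nat \<Rightarrow> real" and a :: real
  assumes a: "a > 0" and Vp: "\<And>n. V n > 0" and Vlim: "filterlim V at_top sequentially"
  shows "(\<lambda>n. ln (suminf (prof (a\<^sup>2 * (V n)\<^sup>2))) / V n) \<longlonglongrightarrow> 2 * sqrt 2 * a"
proof -
  define c where "c n = a\<^sup>2 * (V n)\<^sup>2" for n
  have c: "c n > 0" for n using a Vp[of n] by (simp add: c_def)
  define y where "y n = nat \<lfloor>a / sqrt 2 * V n\<rfloor>" for n
  have ylim: "(\<lambda>n. real (y n) / V n) \<longlonglongrightarrow> a / sqrt 2"
    unfolding y_def by (rule floor_scaled_ratio) (use a Vp Vlim in auto)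
  have lower: "(\<lambda>n. ln (prof (c n) (y n)) / V n) \<longlonglongrightarrow> 2 * sqrt 2 * a"
    using prof_rate[OF a Vp Vlim ylim] a prof_rate_equilibrium[OF a] by (simp add: c_def)
  have upper: "(\<lambda>n. ln 2 * (1 / V n) + 2 * sqrt 2 * a) \<longlonglongrightarrow> ln 2 * 0 + 2 * sqrt 2 * a"
    using tendsto_inverse_0_at_top[OF Vlim] by (intro tendsto_intros) (simp add: divide_inverse)
  have bounds: "ln (prof (c n) (y n)) / V n \<le> ln (suminf (prof (c n))) / V n
      \<and> ln (suminf (prof (c n))) / V n \<le> ln 2 * (1 / V n) + 2 * sqrt 2 * a" for n
  proof -
    have sm: "summable (prof (c n))" using prof_summable(1) c[of n] by simp
    have single: "prof (c n) (y n) \<le> suminf (prof (c n))"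
      using sum_le_suminf[OF sm, of "{y n}"] prof_pos[OF c] less_imp_le by auto
    then have lo: "ln (prof (c n) (y n)) \<le> ln (suminf (prof (c n)))"
      using prof_pos[OF c] by (intro ln_mono) auto
    have "sqrt (2 * c n) = sqrt 2 * a * V n" using a Vp[of n] by (simp add: c_def real_sqrt_mult)
    then have "suminf (prof (c n)) \<le> 2 * exp (2 * sqrt 2 * a * V n)"
      using prof_summable(2)[of "c n"] c[of n] by (simp add: mult.assoc)
    then have "ln (suminf (prof (c n))) \<le> ln (2 * exp (2 * sqrt 2 * a * V n))"
      using single prof_pos[OF c, of n "y n"] by (intro ln_mono) auto
    then have "ln (suminf (prof (c n))) \<le> ln 2 + 2 * sqrt 2 * a * V n" by (simp add: ln_mult)
    then show ?thesis using lo Vp[of n] by (simp add: divide_right_mono field_simps)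
  qed
  show ?thesis unfolding c_def[symmetric]
    by (rule tendsto_sandwich[OF _ _ lower]) (use bounds upper in auto)
qed

lemma stationary_log_rate:
  fixes k1 k2 :: real and \<pi> :: "real \<Rightarrow> nat \<Rightarrow> real" and V :: "nat \<Rightarrow> real" and m :: "nat \<Rightarrow> nat"
  assumes k1: "0 < k1" and k2: "0 < k2"
    and stat: "\<And>V. 0 < V \<Longrightarrow> stationary_dist k1 k2 V (\<pi> V)"
    and Vp: "\<And>n. V n > 0" and Vlim: "filterlim V at_top sequentially"
    and xlim: "(\<lambda>n. real (m n) / V n) \<longlonglongrightarrow> x" and x: "0 < x"
  shows "(\<lambda>n. - (1 / V n) * ln (\<pi> (V n) (m n))) \<longlonglongrightarrow> gfun k1 k2 x"
proof -
  define a where "a = sqrt (k1 / k2)"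
  have a: "a > 0" using k1 k2 by (simp add: a_def)
  define c where "c n = a\<^sup>2 * (V n)\<^sup>2" for n
  have c: "c n > 0" for n using a Vp[of n] by (simp add: c_def)
  have S: "suminf (prof (c n)) > 0" for n
    using prof_summable(1) suminf_pos prof_pos[OF c] c by (meson less_imp_le)
  have "\<pi> (V n) (m n) = prof (c n) (m n) / suminf (prof (c n))" for n
    using stationary_dist_eq_prof[OF k1 k2 Vp stat[OF Vp]] k1 k2 by (simp add: c_def a_def)
  then have eq: "- (1 / V n) * ln (\<pi> (V n) (m n))
      = ln (suminf (prof (c n))) / V n - ln (prof (c n) (m n)) / V n" for n
    using prof_pos[OF c, of n "m n"] S[of n] by (simp add: ln_div diff_divide_distrib)
  have "(\<lambda>n. ln (suminf (prof (c n))) / V n - ln (prof (c n) (m n)) / V n)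
      \<longlonglongrightarrow> 2 * sqrt 2 * a - prof_rate a x"
    unfolding c_def by (intro tendsto_diff partition_rate prof_rate a Vp Vlim xlim x)
  then show ?thesis
    unfolding eq gfun_eq_lyap a_def[symmetric] lyap_eq_prof_rate[OF a x] .
qed

theorem mainTheorem3:
  fixes k1 k2 :: real
    and \<pi> :: "real \<Rightarrow> nat \<Rightarrow> real"
    and Vs :: "nat \<Rightarrow> real"
    and m :: "nat \<Rightarrow> nat"
    and xt :: real
  assumes k1: "0 < k1" and k2: "0 < k2"
    and stat: "\<And>V. 0 < V \<Longrightarrow> stationary_dist k1 k2 V (\<pi> V)"
    and Vpos: "0 < Vs 0" and Vinc: "strict_mono Vs" and Vlim: "filterlim Vs at_top sequentially"
    and xlim: "(\<lambda>n. real (m n) / Vs n) \<longlonglongrightarrow> xt" and xpos: "0 < xt"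
  shows "(\<lambda>n. - (1 / Vs n) * ln (\<pi> (Vs n) (m n))) \<longlonglongrightarrow> gfun k1 k2 xt
    \<and> (\<forall>x>0. gfun k1 k2 differentiable (at x) \<and> deriv (gfun k1 k2) differentiable (at x)
               \<and> deriv (deriv (gfun k1 k2)) x > 0)
    \<and> gfun k1 k2 (sqrt (k1 / (2 * k2))) = 0
    \<and> (\<forall>x>0. x \<noteq> sqrt (k1 / (2 * k2)) \<longrightarrow> gfun k1 k2 x > 0)
    \<and> (\<forall>x>0. deriv (gfun k1 k2) x * (k1 - 2 * k2 * x\<^sup>2) \<le> 0)
    \<and> (\<forall>x>0. deriv (gfun k1 k2) x * (k1 - 2 * k2 * x\<^sup>2) = 0 \<longleftrightarrow> x = sqrt (k1 / (2 * k2)))"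
proof -
  have Vp: "Vs n > 0" for n
    using Vpos Vinc by (metis le0 order_less_le_trans strict_mono_less_eq)
  show ?thesis
    using stationary_log_rate[OF k1 k2 stat Vp Vlim xlim xpos] gfun_lyapunov[OF k1 k2] by blast
qed

end
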